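(* Let $\{B(X)\}_{X\in\mathbb R^2}$ be a centered Gaussian process with $B((0,0))=0$ and $\mathrm{Cov}(B(X),B(Y))=\tfrac12\big(d_2((0,0),X)+d_2((0,0),Y)-d_2(X,Y)\big)$. Let $A_1,\ldots,A_n\in\mathbb R^2$, $A_i=(A_i^{(1)},A_i^{(2)})$, be such that: $(0,0)\in\{A_1,\ldots,A_n\}$ and $(A_i^{(1)},0)\in\{A_1,\ldots,A_n\}$ for every $i$; there are positive integers $n_1,\ldots,n_q$ with $n_1+\cdots+n_q=n$ such that, with $N_0=0$, $N_l=n_1+\cdots+n_l$, the first coordinates $A_i^{(1)}$ are constant for $i\in\{N_{l-1}+1,\ldots,N_l\}$ and strictly increase from one group $l$ to the next; and within each group the second coordinates satisfy $A_{N_{l-1}+1}^{(2)}\le A_{N_{l-1}+2}^{(2)}\le\cdots\le A_{N_l}^{(2)}$. Then there exist independent Gaussian random variables $Z_1,\ldots,Z_{n-1}$ and subsets $I_1,\ldots,I_n\subset\{1,\ldots,n-1\}$ such that $\big(B(A_1),\ldots,B(A_n)\big)$ has the same distribution as $\big(\sum_{k\in I_1}Z_k,\ldots,\sum_{k\in I_n}Z_k\big)$.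
   Context: The river metric on $\mathbb R^2$ is $d_2(A,B)=|A^{(2)}-B^{(2)}|$ if $A^{(1)}=B^{(1)}$, and $d_2(A,B)=|A^{(2)}|+|A^{(1)}-B^{(1)}|+|B^{(2)}|$ if $A^{(1)}\neq B^{(1)}$. *)

theory Defs
  imports "HOL-Probability.Probability"
begin

definition river_dist :: "real \<times> real \<Rightarrow> real \<times> real \<Rightarrow> real" where
  "river_dist A B =
     (if fst A = fst B then \<bar>snd A - snd B\<bar>
      else \<bar>snd A\<bar> + \<bar>fst A - fst B\<bar> + \<bar>snd B\<bar>)"

definition centered_gaussian_rv :: "'a measure \<Rightarrow> ('a \<Rightarrow> real) \<Rightarrow> bool" where
  "centered_gaussian_rv M Y \<longleftrightarrow>
     Y \<in> borel_measurable M \<and>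
     ((AE \<omega> in M. Y \<omega> = 0) \<or> (\<exists>\<sigma>>0. distributed M lborel Y (normal_density 0 \<sigma>)))"

definition gaussian_rv :: "'a measure \<Rightarrow> ('a \<Rightarrow> real) \<Rightarrow> bool" where
  "gaussian_rv M Y \<longleftrightarrow> (\<exists>\<mu> \<sigma>. \<sigma> > 0 \<and> distributed M lborel Y (normal_density \<mu> \<sigma>))"

definition centered_gaussian_process :: "'a measure \<Rightarrow> ('t \<Rightarrow> 'a \<Rightarrow> real) \<Rightarrow> bool" where
  "centered_gaussian_process M B \<longleftrightarrow>
     prob_space M \<and> (\<forall>t. B t \<in> borel_measurable M) \<and>
     (\<forall>F c. finite F \<longrightarrow> centered_gaussian_rv M (\<lambda>\<omega>. \<Sum>t\<in>F. c t * B t \<omega>))"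

end

theory Submission
  imports Defs
begin

text \<open>
  On a finite set V of points containing the origin and closed under projection onto the
  first axis, the river metric is a tree metric: Q lies below P when Q is on the river path
  from the origin to P, every point Q \<noteq> 0 of V has as parent the point of V strictly below it
  farthest from the origin, and the edge to the parent has length river_edge V Q. The covariance
  (d(0,P) + d(0,Q) - d(P,Q))/2 is the depth of the meet of P and Q, i.e. the total length of
  the edges leading to their common ancestors. Hence, for independent centered normals Z_Q with
  variance river_edge V Q, the sums of Z_Q over the ancestors of P have the covariance of B.
  Two centered Gaussian vectors with the same covariance have the same characteristic
  function, hence the same law by a multivariate Levy uniqueness theorem, proved by
  trading the exponentials for indicators one coordinate at a time.
\<close>

section \<open>Uniqueness of laws from characteristic functions\<close>

lemma real_distribution_density_const:
  fixes \<mu> :: "real measure"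
  assumes sets: "sets \<mu> = sets borel" and total: "emeasure \<mu> UNIV = ennreal c" and c: "0 < c"
  shows "real_distribution (density \<mu> (\<lambda>_. ennreal (1 / c)))"
proof -
  have space: "space \<mu> = UNIV" using sets_eq_imp_space_eq[OF sets] by simp
  then have "UNIV \<in> sets \<mu>" using sets.top[of \<mu>] by simp
  then have "emeasure (density \<mu> (\<lambda>_. ennreal (1 / c))) (space \<mu>) = ennreal (1 / c) * ennreal c"
    using total space by (simp add: emeasure_density_const)
  also have "\<dots> = 1" using c by (simp add: ennreal_mult''[symmetric])
  finally show ?thesis
    using sets unfolding real_distribution_def real_distribution_axioms_def
    by (auto intro!: prob_spaceI)
qed

lemma char_density_const:
  fixes \<mu> :: "real measure"
  assumes "sets \<mu> = sets borel" "0 \<le> c"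
  shows "char (density \<mu> (\<lambda>_. ennreal c)) t = c * char \<mu> t"
  unfolding char_def using assms by (subst integral_density) (auto simp: scaleR_conv_of_real)

lemma Levy_uniqueness_finite:
  fixes \<mu> \<nu> :: "real measure"
  assumes fin: "finite_measure \<mu>" "finite_measure \<nu>"
    and sets: "sets \<mu> = sets borel" "sets \<nu> = sets borel" and char: "char \<mu> = char \<nu>"
  shows "\<mu> = \<nu>"
proof -
  have space: "space \<mu> = UNIV" "space \<nu> = UNIV"
    using sets_eq_imp_space_eq[OF sets(1)] sets_eq_imp_space_eq[OF sets(2)] by simp_all
  define c where "c = measure \<mu> UNIV"
  have "char \<mu> 0 = c" "char \<nu> 0 = measure \<nu> UNIV"
    unfolding char_def c_def using space by (simp_all add: scaleR_conv_of_real)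
  then have total: "emeasure \<mu> UNIV = ennreal c" "emeasure \<nu> UNIV = ennreal c"
    using fin space char by (auto simp: finite_measure.emeasure_eq_measure c_def)
  show ?thesis
  proof (cases "c = 0")
    case True
    show ?thesis
    proof (rule measure_eqI)
      fix A assume "A \<in> sets \<mu>"
      then have "emeasure \<mu> A \<le> emeasure \<mu> UNIV" "emeasure \<nu> A \<le> emeasure \<nu> UNIV"
        using space sets by (auto intro!: emeasure_mono)
      then show "emeasure \<mu> A = emeasure \<nu> A" using total True by simp
    qed (simp add: sets)
  next
    case False
    then have c: "0 < c" unfolding c_def using measure_nonneg[of \<mu> UNIV] by linarith
    have "density \<mu> (\<lambda>_. ennreal (1 / c)) = density \<nu> (\<lambda>_. ennreal (1 / c))"
      using char c sets
      by (intro Levy_uniqueness real_distribution_density_const total ext) (simp_all add: char_density_const)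
    then have "emeasure \<mu> A * ennreal (1 / c) = emeasure \<nu> A * ennreal (1 / c)" if "A \<in> sets borel" for A
      using that sets by (metis emeasure_density_const mult.commute)
    then have "emeasure \<mu> A * (ennreal (1 / c) * ennreal c) = emeasure \<nu> A * (ennreal (1 / c) * ennreal c)"
      if "A \<in> sets borel" for A
      using that by (simp add: mult.assoc[symmetric])
    then show ?thesis
      using c sets by (intro measure_eqI) (simp_all add: ennreal_mult''[symmetric])
  qed
qed

lemma finite_measure_distr_density:
  fixes h :: "'a \<Rightarrow> real"
  assumes K: "prob_space K" and [measurable]: "V \<in> borel_measurable K" "h \<in> borel_measurable K"
    and h: "\<And>\<omega>. \<omega> \<in> space K \<Longrightarrow> 0 \<le> h \<omega> \<and> h \<omega> \<le> C"
  shows "finite_measure (distr (density K h) borel V)"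
proof (rule finite_measureI)
  have "emeasure (distr (density K h) borel V) (space (distr (density K h) borel V))
      = (\<integral>\<^sup>+ \<omega>. ennreal (h \<omega>) \<partial>K)"
    by (simp add: emeasure_distr emeasure_density cong: nn_integral_cong)
  also have "\<dots> \<le> (\<integral>\<^sup>+ \<omega>. ennreal C \<partial>K)"
    using h by (intro nn_integral_mono) (auto intro: ennreal_leI)
  also have "\<dots> = ennreal C" using K by (simp add: prob_space.emeasure_space_1)
  finally show "emeasure (distr (density K h) borel V) (space (distr (density K h) borel V)) \<noteq> \<infinity>"
    by (auto simp: top_unique)
qed

lemma char_distr_density:
  fixes h :: "'a \<Rightarrow> real"
  assumes [measurable]: "V \<in> borel_measurable K" "h \<in> borel_measurable K"
    and h: "\<And>\<omega>. \<omega> \<in> space K \<Longrightarrow> 0 \<le> h \<omega>"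
  shows "char (distr (density K h) borel V) s = (CLINT \<omega>|K. h \<omega> *\<^sub>R iexp (s * V \<omega>))"
  unfolding char_def using h by (simp add: integral_distr integral_density)

lemma integral_indicator_distr_density:
  fixes h :: "'a \<Rightarrow> real"
  assumes [measurable]: "V \<in> borel_measurable K" "h \<in> borel_measurable K" "B \<in> sets borel"
    and h: "\<And>\<omega>. \<omega> \<in> space K \<Longrightarrow> 0 \<le> h \<omega>"
  shows "(LINT x|distr (density K h) borel V. indicator B x :: real) = (LINT \<omega>|K. h \<omega> * indicator B (V \<omega>))"
proof -
  have "(LINT x|distr (density K h) borel V. indicator B x :: real) = (LINT \<omega>|density K h. indicator B (V \<omega>))"
    by (subst integral_distr) auto
  also have "\<dots> = (LINT \<omega>|K. h \<omega> *\<^sub>R indicator B (V \<omega>))"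
    by (rule integral_density) (use h in auto)
  finally show ?thesis by simp
qed

lemma indicator_integral_eq_if_char_eq_nonneg:
  fixes M :: "'a measure" and N :: "'b measure"
  assumes M: "prob_space M" and N: "prob_space N"
    and meas: "U \<in> borel_measurable M" "U' \<in> borel_measurable N" "g \<in> borel_measurable M" "g' \<in> borel_measurable N"
    and g: "\<And>\<omega>. \<omega> \<in> space M \<Longrightarrow> 0 \<le> g \<omega> \<and> g \<omega> \<le> C"
    and g': "\<And>\<omega>. \<omega> \<in> space N \<Longrightarrow> 0 \<le> g' \<omega> \<and> g' \<omega> \<le> C"
    and char: "\<And>s. (CLINT \<omega>|M. g \<omega> *\<^sub>R iexp (s * U \<omega>)) = (CLINT \<omega>|N. g' \<omega> *\<^sub>R iexp (s * U' \<omega>))"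
    and B: "B \<in> sets borel"
  shows "(LINT \<omega>|M. g \<omega> * indicator B (U \<omega>)) = (LINT \<omega>|N. g' \<omega> * indicator B (U' \<omega>))"
proof -
  have "char (distr (density M g) borel U) s = char (distr (density N g') borel U') s" for s
    using g g' char[of s] by (simp add: char_distr_density[OF meas(1,3)] char_distr_density[OF meas(2,4)])
  then have "distr (density M g) borel U = distr (density N g') borel U'"
    using g g'
    by (intro Levy_uniqueness_finite ext finite_measure_distr_density[OF M meas(1,3)]
        finite_measure_distr_density[OF N meas(2,4)]) auto
  moreover have "(LINT x|distr (density M g) borel U. indicator B x :: real) = (LINT \<omega>|M. g \<omega> * indicator B (U \<omega>))"
    using g by (intro integral_indicator_distr_density[OF meas(1,3) B]) auto
  moreover have "(LINT x|distr (density N g') borel U'. indicator B x :: real) = (LINT \<omega>|N. g' \<omega> * indicator B (U' \<omega>))"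
    using g' by (intro integral_indicator_distr_density[OF meas(2,4) B]) auto
  ultimately show ?thesis by metis
qed

lemma (in prob_space) integrable_bounded:
  fixes f :: "'a \<Rightarrow> 'b::{banach,second_countable_topology}"
  shows "f \<in> borel_measurable M \<Longrightarrow> (\<And>x. norm (f x) \<le> C) \<Longrightarrow> integrable M f"
  by (rule integrable_const_bound[where B=C]) auto

lemma indicator_integral_eq_if_char_eq_real:
  fixes M :: "'a measure" and N :: "'b measure"
  assumes M: "prob_space M" and N: "prob_space N"
    and meas[measurable]: "U \<in> borel_measurable M" "U' \<in> borel_measurable N"
      "R \<in> borel_measurable M" "R' \<in> borel_measurable N"
    and R_le: "\<And>\<omega>. \<bar>R \<omega>\<bar> \<le> 1" "\<And>\<omega>. \<bar>R' \<omega>\<bar> \<le> 1"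
    and char: "\<And>s. (CLINT \<omega>|M. iexp (s * U \<omega>)) = (CLINT \<omega>|N. iexp (s * U' \<omega>))"
    and char_R: "\<And>s. (CLINT \<omega>|M. R \<omega> *\<^sub>R iexp (s * U \<omega>)) = (CLINT \<omega>|N. R' \<omega> *\<^sub>R iexp (s * U' \<omega>))"
    and [measurable]: "B \<in> sets borel"
  shows "(LINT \<omega>|M. R \<omega> * indicator B (U \<omega>)) = (LINT \<omega>|N. R' \<omega> * indicator B (U' \<omega>))"
proof -
  interpret M: prob_space M by (rule M)
  interpret N: prob_space N by (rule N)
  have R_range: "0 \<le> 1 + R \<omega>" "1 + R \<omega> \<le> 2" "0 \<le> 1 + R' \<omega>'" "1 + R' \<omega>' \<le> 2" for \<omega> \<omega>'
    using R_le(1)[of \<omega>] R_le(2)[of \<omega>'] by (simp_all add: abs_le_iff)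
  have eq_1: "(LINT \<omega>|M. (1::real) * indicator B (U \<omega>)) = (LINT \<omega>|N. 1 * indicator B (U' \<omega>))"
    by (rule indicator_integral_eq_if_char_eq_nonneg[OF M N, where C=1 and g="\<lambda>_. 1" and g'="\<lambda>_. 1"]) (auto simp: char simp del: of_real_mult)
  have eq_1_R: "(LINT \<omega>|M. (1 + R \<omega>) * indicator B (U \<omega>) :: real)
      = (LINT \<omega>|N. (1 + R' \<omega>) * indicator B (U' \<omega>))"
  proof (rule indicator_integral_eq_if_char_eq_nonneg[OF M N, where C=2 and g="\<lambda>\<omega>. 1 + R \<omega>" and g'="\<lambda>\<omega>. 1 + R' \<omega>"])
    fix s
    have "(CLINT \<omega>|M. (1 + R \<omega>) *\<^sub>R iexp (s * U \<omega>))
        = (CLINT \<omega>|M. iexp (s * U \<omega>)) + (CLINT \<omega>|M. R \<omega> *\<^sub>R iexp (s * U \<omega>))"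
      unfolding scaleR_add_left scaleR_one
      by (intro Bochner_Integration.integral_add M.integrable_bounded[where C=1])
         (auto simp: norm_exp_i_times R_le)
    also have "\<dots> = (CLINT \<omega>|N. iexp (s * U' \<omega>)) + (CLINT \<omega>|N. R' \<omega> *\<^sub>R iexp (s * U' \<omega>))"
      by (simp only: char char_R)
    also have "\<dots> = (CLINT \<omega>|N. (1 + R' \<omega>) *\<^sub>R iexp (s * U' \<omega>))"
      unfolding scaleR_add_left scaleR_one
      by (intro Bochner_Integration.integral_add[symmetric] N.integrable_bounded[where C=1])
         (auto simp: norm_exp_i_times R_le)
    finally show "(CLINT \<omega>|M. (1 + R \<omega>) *\<^sub>R iexp (s * U \<omega>))
        = (CLINT \<omega>|N. (1 + R' \<omega>) *\<^sub>R iexp (s * U' \<omega>))" .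
  qed (auto simp: R_range)
  have split: "(LINT \<omega>|K. (1 + Q \<omega>) * indicator B (X \<omega>))
      = (LINT \<omega>|K. indicator B (X \<omega>)) + (LINT \<omega>|K. Q \<omega> * indicator B (X \<omega>))"
    if K: "prob_space K" and XQ: "X \<in> borel_measurable K" "Q \<in> borel_measurable K"
      and Q_le: "\<And>\<omega>. \<bar>Q \<omega>\<bar> \<le> 1"
    for K :: "'c measure" and X Q :: "'c \<Rightarrow> real"
  proof -
    note [measurable] = XQ \<open>B \<in> sets borel\<close>
    have bounded: "norm (indicator B (X \<omega>) :: real) \<le> 1" "norm (Q \<omega> * indicator B (X \<omega>)) \<le> 1" for \<omega>
      using Q_le[of \<omega>] by (simp_all split: split_indicator)
    have meas: "(\<lambda>\<omega>. indicator B (X \<omega>) :: real) \<in> borel_measurable K"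
      "(\<lambda>\<omega>. Q \<omega> * indicator B (X \<omega>)) \<in> borel_measurable K"
      by measurable
    show ?thesis
      unfolding distrib_right mult_1
      by (intro Bochner_Integration.integral_add prob_space.integrable_bounded[OF K meas(1) bounded(1)]
          prob_space.integrable_bounded[OF K meas(2) bounded(2)])
  qed
  show ?thesis
    using eq_1 eq_1_R split[OF M meas(1) meas(3) R_le(1)] split[OF N meas(2) meas(4) R_le(2)] by simp
qed

lemma integral_Re_Im_scaleR_iexp:
  fixes K :: "'a measure" and W :: "'a \<Rightarrow> complex"
  assumes K: "prob_space K" and [measurable]: "W \<in> borel_measurable K" "X \<in> borel_measurable K"
    and W_le: "\<And>\<omega>. norm (W \<omega>) \<le> 1"
  shows "(CLINT \<omega>|K. Re (W \<omega>) *\<^sub>R iexp (s * X \<omega>))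
      = ((CLINT \<omega>|K. W \<omega> * iexp (s * X \<omega>)) + cnj (CLINT \<omega>|K. W \<omega> * iexp (- s * X \<omega>))) / 2"
    and "(CLINT \<omega>|K. Im (W \<omega>) *\<^sub>R iexp (s * X \<omega>))
      = ((CLINT \<omega>|K. W \<omega> * iexp (s * X \<omega>)) - cnj (CLINT \<omega>|K. W \<omega> * iexp (- s * X \<omega>))) / (2 * \<i>)"
proof -
  have int: "integrable K (\<lambda>\<omega>. W \<omega> * iexp (t * X \<omega>))" for t
    using W_le by (intro prob_space.integrable_bounded[OF K]) (measurable, simp add: norm_mult norm_exp_i_times)
  have conj: "cnj (W \<omega> * iexp (- s * X \<omega>)) = cnj (W \<omega>) * iexp (s * X \<omega>)" for \<omega>
    by (simp add: exp_cnj)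
  have pointwise: "Re (W \<omega>) *\<^sub>R iexp (s * X \<omega>) = (W \<omega> * iexp (s * X \<omega>) + cnj (W \<omega> * iexp (- s * X \<omega>))) / 2"
    "Im (W \<omega>) *\<^sub>R iexp (s * X \<omega>) = (W \<omega> * iexp (s * X \<omega>) - cnj (W \<omega> * iexp (- s * X \<omega>))) / (2 * \<i>)"
    for \<omega>
  proof -
    have "z - cnj z = 2 * \<i> * of_real (Im z)" for z by (simp add: complex_eq_iff)
    then have "Im z *\<^sub>R w = (z * w - cnj z * w) / (2 * \<i>)" for z w
      by (simp add: scaleR_conv_of_real left_diff_distrib[symmetric])
    moreover have "Re z *\<^sub>R w = (z * w + cnj z * w) / 2" for z w
      by (simp add: complex_eq_iff scaleR_conv_of_real algebra_simps)
    ultimately show "Re (W \<omega>) *\<^sub>R iexp (s * X \<omega>) = (W \<omega> * iexp (s * X \<omega>) + cnj (W \<omega> * iexp (- s * X \<omega>))) / 2"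
      "Im (W \<omega>) *\<^sub>R iexp (s * X \<omega>) = (W \<omega> * iexp (s * X \<omega>) - cnj (W \<omega> * iexp (- s * X \<omega>))) / (2 * \<i>)"
      unfolding conj by simp_all
  qed
  then show "(CLINT \<omega>|K. Re (W \<omega>) *\<^sub>R iexp (s * X \<omega>))
      = ((CLINT \<omega>|K. W \<omega> * iexp (s * X \<omega>)) + cnj (CLINT \<omega>|K. W \<omega> * iexp (- s * X \<omega>))) / 2"
    "(CLINT \<omega>|K. Im (W \<omega>) *\<^sub>R iexp (s * X \<omega>))
      = ((CLINT \<omega>|K. W \<omega> * iexp (s * X \<omega>)) - cnj (CLINT \<omega>|K. W \<omega> * iexp (- s * X \<omega>))) / (2 * \<i>)"
    unfolding pointwise integral_divide_zero
    using int[of s] integrable_cnj[OF int[of "- s"]]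
    by (simp_all only: Bochner_Integration.integral_add Bochner_Integration.integral_diff Bochner_Integration.integral_cnj)
qed

lemma indicator_integral_eq_if_char_eq:
  fixes M :: "'a measure" and N :: "'b measure" and V :: "'a \<Rightarrow> complex" and V' :: "'b \<Rightarrow> complex"
  assumes M: "prob_space M" and N: "prob_space N"
    and meas[measurable]: "U \<in> borel_measurable M" "U' \<in> borel_measurable N"
      "V \<in> borel_measurable M" "V' \<in> borel_measurable N"
    and V_le: "\<And>\<omega>. norm (V \<omega>) \<le> 1" "\<And>\<omega>. norm (V' \<omega>) \<le> 1"
    and char: "\<And>s. (CLINT \<omega>|M. iexp (s * U \<omega>)) = (CLINT \<omega>|N. iexp (s * U' \<omega>))"
    and char_V: "\<And>s. (CLINT \<omega>|M. V \<omega> * iexp (s * U \<omega>)) = (CLINT \<omega>|N. V' \<omega> * iexp (s * U' \<omega>))"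
    and B[measurable]: "B \<in> sets borel"
  shows "(CLINT \<omega>|M. indicator B (U \<omega>) *\<^sub>R V \<omega>) = (CLINT \<omega>|N. indicator B (U' \<omega>) *\<^sub>R V' \<omega>)"
proof -
  have Re_le: "\<bar>Re (V \<omega>)\<bar> \<le> 1" "\<bar>Re (V' \<omega>')\<bar> \<le> 1" and Im_le: "\<bar>Im (V \<omega>)\<bar> \<le> 1" "\<bar>Im (V' \<omega>')\<bar> \<le> 1"
    for \<omega> \<omega>'
    using V_le(1)[of \<omega>] V_le(2)[of \<omega>'] abs_Re_le_cmod abs_Im_le_cmod by (metis order_trans)+
  have "(CLINT \<omega>|M. Re (V \<omega>) *\<^sub>R iexp (s * U \<omega>)) = (CLINT \<omega>|N. Re (V' \<omega>) *\<^sub>R iexp (s * U' \<omega>))"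
    "(CLINT \<omega>|M. Im (V \<omega>) *\<^sub>R iexp (s * U \<omega>)) = (CLINT \<omega>|N. Im (V' \<omega>) *\<^sub>R iexp (s * U' \<omega>))"
    for s
    unfolding integral_Re_Im_scaleR_iexp[OF M meas(3,1) V_le(1)]
      integral_Re_Im_scaleR_iexp[OF N meas(4,2) V_le(2)] char_V by simp_all
  then have Re_Im: "(LINT \<omega>|M. Re (V \<omega>) * indicator B (U \<omega>)) = (LINT \<omega>|N. Re (V' \<omega>) * indicator B (U' \<omega>))"
    "(LINT \<omega>|M. Im (V \<omega>) * indicator B (U \<omega>)) = (LINT \<omega>|N. Im (V' \<omega>) * indicator B (U' \<omega>))"
    by (intro indicator_integral_eq_if_char_eq_real[OF M N meas(1,2) _ _ _ _ char _ B] Re_le Im_le;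
        measurable?; simp)+
  have int: "integrable K (\<lambda>\<omega>. indicator B (X \<omega>) *\<^sub>R W \<omega>)"
    if K: "prob_space K" and XW: "X \<in> borel_measurable K" "W \<in> borel_measurable K"
      and W_le: "\<And>\<omega>. norm (W \<omega>) \<le> 1"
    for K :: "'c measure" and X and W :: "'c \<Rightarrow> complex"
  proof (rule prob_space.integrable_bounded[OF K])
    show "(\<lambda>\<omega>. indicator B (X \<omega>) *\<^sub>R W \<omega>) \<in> borel_measurable K" using XW by measurable
    show "norm (indicator B (X \<omega>) *\<^sub>R W \<omega>) \<le> 1" for \<omega>
      using W_le[of \<omega>] by (simp split: split_indicator)
  qed
  show ?thesis
    using integral_Re[OF int[OF M meas(1,3) V_le(1)]] integral_Re[OF int[OF N meas(2,4) V_le(2)]]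
      integral_Im[OF int[OF M meas(1,3) V_le(1)]] integral_Im[OF int[OF N meas(2,4) V_le(2)]] Re_Im
    by (intro complex_eqI) (simp_all add: mult.commute)
qed

lemma prod_indicator:
  assumes "finite J"
  shows "(\<Prod>j\<in>J. indicator (A j) (x j) :: real) = (if \<forall>j\<in>J. x j \<in> A j then 1 else 0)"
  using assms by (auto simp: prod_zero_iff indicator_def)

lemma emeasure_distr_PiE:
  fixes K :: "'a measure" and Z :: "'j \<Rightarrow> 'a \<Rightarrow> real"
  assumes K: "prob_space K" and J: "finite J" and [measurable]: "\<And>j. Z j \<in> borel_measurable K"
    and A: "\<And>j. j \<in> J \<Longrightarrow> A j \<in> sets borel"
  shows "emeasure (distr K (PiM J (\<lambda>_. borel)) (\<lambda>\<omega>. \<lambda>j\<in>J. Z j \<omega>)) (Pi\<^sub>E J A)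
       = ennreal (LINT \<omega>|K. (\<Prod>j\<in>J. indicator (A j) (Z j \<omega>)))"
proof -
  interpret K: prob_space K by (rule K)
  let ?S = "{\<omega> \<in> space K. \<forall>j\<in>J. Z j \<omega> \<in> A j}"
  have S: "?S \<in> sets K" using J A by measurable
  have "(\<lambda>\<omega>. \<lambda>j\<in>J. Z j \<omega>) -` Pi\<^sub>E J A \<inter> space K = ?S"
    by (auto simp: PiE_iff)
  then have "emeasure (distr K (PiM J (\<lambda>_. borel)) (\<lambda>\<omega>. \<lambda>j\<in>J. Z j \<omega>)) (Pi\<^sub>E J A) = emeasure K ?S"
    using A by (subst emeasure_distr) (auto intro!: sets_PiM_I_finite J)
  also have "\<dots> = ennreal (LINT \<omega>|K. indicator ?S \<omega>)"
    using S by (simp add: K.emeasure_eq_measure)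
  also have "(LINT \<omega>|K. indicator ?S \<omega> :: real) = (LINT \<omega>|K. (\<Prod>j\<in>J. indicator (A j) (Z j \<omega>)))"
    by (intro Bochner_Integration.integral_cong refl) (auto simp: prod_indicator[OF J] split: split_indicator)
  finally show ?thesis .
qed

lemma distr_PiM_eq_if_rectangles_eq:
  fixes M :: "'a measure" and N :: "'b measure" and X :: "'j \<Rightarrow> 'a \<Rightarrow> real" and Y :: "'j \<Rightarrow> 'b \<Rightarrow> real"
  assumes M: "prob_space M" and N: "prob_space N" and J: "finite J"
    and X: "\<And>j. X j \<in> borel_measurable M" and Y: "\<And>j. Y j \<in> borel_measurable N"
    and rect: "\<And>A. (\<And>j. j \<in> J \<Longrightarrow> A j \<in> sets borel) \<Longrightarrow>
        (LINT \<omega>|M. (\<Prod>j\<in>J. indicator (A j) (X j \<omega>) :: real)) = (LINT \<omega>|N. (\<Prod>j\<in>J. indicator (A j) (Y j \<omega>)))"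
  shows "distr M (PiM J (\<lambda>_. borel)) (\<lambda>\<omega>. \<lambda>j\<in>J. X j \<omega>) = distr N (PiM J (\<lambda>_. borel)) (\<lambda>\<omega>. \<lambda>j\<in>J. Y j \<omega>)"
proof (rule measure_eqI_PiM_finite[where I=J and M="\<lambda>_. borel" and A="\<lambda>_. Pi\<^sub>E J (\<lambda>_. UNIV)"])
  fix A :: "'j \<Rightarrow> real set" assume "\<And>i. i \<in> J \<Longrightarrow> A i \<in> sets borel"
  then show "emeasure (distr M (PiM J (\<lambda>_. borel)) (\<lambda>\<omega>. \<lambda>j\<in>J. X j \<omega>)) (Pi\<^sub>E J A) =
      emeasure (distr N (PiM J (\<lambda>_. borel)) (\<lambda>\<omega>. \<lambda>j\<in>J. Y j \<omega>)) (Pi\<^sub>E J A)"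
    by (simp add: emeasure_distr_PiE[OF M J X] emeasure_distr_PiE[OF N J Y] rect)
next
  show "range (\<lambda>_. Pi\<^sub>E J (\<lambda>_. UNIV)) \<subseteq> prod_algebra J (\<lambda>_. borel)"
    using J by (auto intro!: prod_algebraI_finite)
next
  show "(\<Union>i::nat. Pi\<^sub>E J (\<lambda>_. UNIV)) = space (PiM J (\<lambda>_. borel :: real measure))"
    by (simp add: space_PiM)
next
  show "emeasure (distr M (PiM J (\<lambda>_. borel)) (\<lambda>\<omega>. \<lambda>j\<in>J. X j \<omega>)) (Pi\<^sub>E J (\<lambda>_. UNIV)) \<noteq> \<infinity>"
    by (simp add: emeasure_distr_PiE[OF M J X])
qed (simp_all add: J X Y)

text \<open>Interpolates between the characteristic function (S = {}) and the probability of a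
  rectangle (S = J); the uniqueness proof inducts on S.\<close>
definition indicator_iexp ::
    "('j \<Rightarrow> 'a \<Rightarrow> real) \<Rightarrow> 'j set \<Rightarrow> 'j set \<Rightarrow> ('j \<Rightarrow> real set) \<Rightarrow> ('j \<Rightarrow> real) \<Rightarrow> 'a \<Rightarrow> complex" where
  "indicator_iexp X J S A t \<omega> = (\<Prod>i\<in>S. indicator (A i) (X i \<omega>)) *\<^sub>R iexp (\<Sum>i\<in>J - S. t i * X i \<omega>)"

lemma indicator_iexp_empty: "indicator_iexp X J {} A t \<omega> = iexp (\<Sum>i\<in>J. t i * X i \<omega>)"
  by (simp add: indicator_iexp_def)

lemma indicator_iexp_all: "indicator_iexp X J J A t \<omega> = (\<Prod>i\<in>J. indicator (A i) (X i \<omega>) :: real)"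
  by (simp add: indicator_iexp_def scaleR_conv_of_real del: of_real_prod)

lemma indicator_iexp_UNIV_zero: "indicator_iexp X J S (\<lambda>_. UNIV) (\<lambda>_. 0) \<omega> = 1"
  by (simp add: indicator_iexp_def)

lemma norm_indicator_iexp_le: "norm (indicator_iexp X J S A t \<omega>) \<le> 1"
proof -
  have "\<bar>\<Prod>i\<in>S. indicator (A i) (X i \<omega>) :: real\<bar> \<le> 1"
    unfolding abs_prod by (intro prod_le_1) (auto simp: indicator_def)
  then show ?thesis by (simp add: indicator_iexp_def norm_exp_i_times)
qed

lemma borel_measurable_indicator_iexp:
  assumes [measurable]: "\<And>i. X i \<in> borel_measurable M" and "\<And>i. i \<in> S \<Longrightarrow> A i \<in> sets borel"
  shows "indicator_iexp X J S A t \<in> borel_measurable M"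
  unfolding indicator_iexp_def using assms(2) by measurable

lemma indicator_iexp_insert:
  assumes "finite J" "finite S" "j \<notin> S"
  shows "indicator_iexp X J (insert j S) A t \<omega>
       = indicator (A j) (X j \<omega>) *\<^sub>R indicator_iexp X J S A (t(j := 0)) \<omega>"
proof -
  have "(\<Sum>i\<in>J - S. (t(j := 0)) i * X i \<omega>) = (\<Sum>i\<in>J - insert j S. t i * X i \<omega>)"
    using assms(1) by (intro sum.mono_neutral_cong_right) auto
  then show ?thesis using assms(2,3) by (simp add: indicator_iexp_def)
qed

lemma iexp_add: "iexp a * iexp b = iexp (a + b)"
  by (simp add: exp_add[symmetric] distrib_left)

lemma indicator_iexp_upd:
  assumes "finite J" "j \<in> J" "j \<notin> S"
  shows "indicator_iexp X J S A (t(j := 0)) \<omega> * iexp (s * X j \<omega>) = indicator_iexp X J S A (t(j := s)) \<omega>"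
proof -
  have split: "J - S = insert j (J - insert j S)" using assms by auto
  have sum: "(\<Sum>i\<in>J - S. (t(j := r)) i * X i \<omega>) = r * X j \<omega> + (\<Sum>i\<in>J - insert j S. t i * X i \<omega>)"
    for r
  proof -
    have "(\<Sum>i\<in>J - S. (t(j := r)) i * X i \<omega>) = r * X j \<omega> + (\<Sum>i\<in>J - insert j S. (t(j := r)) i * X i \<omega>)"
      unfolding split using assms(1) by (subst sum.insert) auto
    also have "(\<Sum>i\<in>J - insert j S. (t(j := r)) i * X i \<omega>) = (\<Sum>i\<in>J - insert j S. t i * X i \<omega>)"
      by (rule sum.cong) auto
    finally show ?thesis .
  qed
  show ?thesis
    unfolding indicator_iexp_def sum mult_scaleR_left iexp_add by (simp add: ac_simps)
qed

lemma indicator_iexp_single: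
  assumes "finite J" "j \<in> J" "j \<notin> S"
  shows "indicator_iexp X J S (\<lambda>_. UNIV) ((\<lambda>_. 0)(j := s)) \<omega> = iexp (s * X j \<omega>)"
proof -
  have "(\<lambda>_. 0 :: real)(j := 0) = (\<lambda>_. 0)" by auto
  then show ?thesis
    using indicator_iexp_upd[OF assms, of X "\<lambda>_. UNIV" "\<lambda>_. 0" \<omega> s]
    by (simp add: indicator_iexp_UNIV_zero)
qed

lemma integral_indicator_iexp_eq:
  fixes M :: "'a measure" and N :: "'b measure" and X :: "'j \<Rightarrow> 'a \<Rightarrow> real" and Y :: "'j \<Rightarrow> 'b \<Rightarrow> real"
  assumes M: "prob_space M" and N: "prob_space N" and J: "finite J"
    and X[measurable]: "\<And>j. X j \<in> borel_measurable M" and Y[measurable]: "\<And>j. Y j \<in> borel_measurable N"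
    and char: "\<And>t. (CLINT \<omega>|M. iexp (\<Sum>j\<in>J. t j * X j \<omega>)) = (CLINT \<omega>|N. iexp (\<Sum>j\<in>J. t j * Y j \<omega>))"
    and S: "S \<subseteq> J" and A: "\<And>i. i \<in> S \<Longrightarrow> A i \<in> sets borel"
  shows "(CLINT \<omega>|M. indicator_iexp X J S A t \<omega>) = (CLINT \<omega>|N. indicator_iexp Y J S A t \<omega>)"
  using finite_subset[OF S J] S A
proof (induction S arbitrary: A t rule: finite_induct)
  case empty
  show ?case unfolding indicator_iexp_empty by (rule char)
next
  case (insert j S)
  have j: "j \<in> J" "j \<notin> S" using insert.hyps(2) insert.prems(1) by auto
  have A: "\<And>i. i \<in> S \<Longrightarrow> A i \<in> sets borel" "A j \<in> sets borel" using insert.prems(2) by auto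
  note IH = insert.IH[OF subset_trans[OF subset_insertI insert.prems(1)]]
  have "(CLINT \<omega>|M. indicator (A j) (X j \<omega>) *\<^sub>R indicator_iexp X J S A (t(j := 0)) \<omega>)
      = (CLINT \<omega>|N. indicator (A j) (Y j \<omega>) *\<^sub>R indicator_iexp Y J S A (t(j := 0)) \<omega>)"
  proof (rule indicator_integral_eq_if_char_eq[OF M N X Y _ _ norm_indicator_iexp_le norm_indicator_iexp_le _ _ A(2)])
    show "indicator_iexp X J S A (t(j := 0)) \<in> borel_measurable M"
      "indicator_iexp Y J S A (t(j := 0)) \<in> borel_measurable N"
      using A(1) by (auto intro!: borel_measurable_indicator_iexp)
    show "(CLINT \<omega>|M. iexp (s * X j \<omega>)) = (CLINT \<omega>|N. iexp (s * Y j \<omega>))" for s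
      using IH[of "\<lambda>_. UNIV" "(\<lambda>_. 0)(j := s)"] unfolding indicator_iexp_single[OF J j] by simp
    show "(CLINT \<omega>|M. indicator_iexp X J S A (t(j := 0)) \<omega> * iexp (s * X j \<omega>))
        = (CLINT \<omega>|N. indicator_iexp Y J S A (t(j := 0)) \<omega> * iexp (s * Y j \<omega>))" for s
      unfolding indicator_iexp_upd[OF J j] using IH[OF A(1)] .
  qed
  then show ?case
    by (simp only: indicator_iexp_insert[OF J insert.hyps(1,2)])
qed

lemma distr_PiM_eq_if_char_eq:
  fixes M :: "'a measure" and N :: "'b measure" and X :: "'j \<Rightarrow> 'a \<Rightarrow> real" and Y :: "'j \<Rightarrow> 'b \<Rightarrow> real"
  assumes M: "prob_space M" and N: "prob_space N" and J: "finite J"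
    and X: "\<And>j. X j \<in> borel_measurable M" and Y: "\<And>j. Y j \<in> borel_measurable N"
    and char: "\<And>t. (CLINT \<omega>|M. iexp (\<Sum>j\<in>J. t j * X j \<omega>)) = (CLINT \<omega>|N. iexp (\<Sum>j\<in>J. t j * Y j \<omega>))"
  shows "distr M (PiM J (\<lambda>_. borel)) (\<lambda>\<omega>. \<lambda>j\<in>J. X j \<omega>) = distr N (PiM J (\<lambda>_. borel)) (\<lambda>\<omega>. \<lambda>j\<in>J. Y j \<omega>)"
proof (rule distr_PiM_eq_if_rectangles_eq[OF M N J X Y])
  fix A :: "'j \<Rightarrow> real set" assume "\<And>j. j \<in> J \<Longrightarrow> A j \<in> sets borel"
  then have "(CLINT \<omega>|M. indicator_iexp X J J A t \<omega>) = (CLINT \<omega>|N. indicator_iexp Y J J A t \<omega>)" for t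
    by (rule integral_indicator_iexp_eq[OF M N J X Y char order_refl])
  then show "(LINT \<omega>|M. (\<Prod>j\<in>J. indicator (A j) (X j \<omega>) :: real)) = (LINT \<omega>|N. (\<Prod>j\<in>J. indicator (A j) (Y j \<omega>)))"
    by (simp only: indicator_iexp_all integral_complex_of_real of_real_eq_iff)
qed

section \<open>Centered Gaussian vectors\<close>

lemma normal_second_moment:
  assumes M: "prob_space M" and s: "0 < \<sigma>" and D: "distributed M lborel Y (normal_density 0 \<sigma>)"
  shows "integrable M (\<lambda>\<omega>. (Y \<omega>)\<^sup>2)" "(LINT \<omega>|M. (Y \<omega>)\<^sup>2) = \<sigma>\<^sup>2"
proof -
  have "integrable lborel (\<lambda>x. normal_density 0 \<sigma> x * (x - 0)^2)"
    by (rule integrable_normal_moment[OF s])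
  then show "integrable M (\<lambda>\<omega>. (Y \<omega>)\<^sup>2)"
    using distributed_integrable[OF D, of "\<lambda>x. x\<^sup>2"] by simp
  have "(LINT x|lborel. normal_density 0 \<sigma> x * (x - 0)^(2*1)) = fact (2 * 1) / ((2 / \<sigma>\<^sup>2)^1 * fact 1)"
    by (rule integral_normal_moment_even[OF s])
  then have "(LINT x|lborel. normal_density 0 \<sigma> x * x\<^sup>2) = \<sigma>\<^sup>2" using s by simp
  then show "(LINT \<omega>|M. (Y \<omega>)\<^sup>2) = \<sigma>\<^sup>2"
    using distributed_integral[OF D, of "\<lambda>x. x\<^sup>2"] by simp
qed

lemma integral_iexp_normal:
  assumes M: "prob_space M" and s: "0 < \<sigma>" and D: "distributed M lborel Y (normal_density 0 \<sigma>)"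
  shows "(CLINT \<omega>|M. iexp (Y \<omega>)) = exp (- (\<sigma>\<^sup>2) / 2)"
proof -
  interpret prob_space M by (rule M)
  have D': "distributed M lborel (\<lambda>x. (Y x - 0) / \<sigma>) std_normal_density"
    using normal_standard_normal_convert[OF s] D by blast
  have Ym[measurable]: "Y \<in> borel_measurable M" using D by (auto simp: distributed_def)
  have "distr M lborel (\<lambda>x. (Y x - 0) / \<sigma>) = std_normal_distribution"
    using D' by (simp add: distributed_def)
  then have "char std_normal_distribution \<sigma> = (CLINT x|distr M lborel (\<lambda>x. (Y x - 0) / \<sigma>). iexp (\<sigma> * x))"
    by (simp add: char_def)
  also have "\<dots> = (CLINT \<omega>|M. iexp (\<sigma> * ((Y \<omega> - 0) / \<sigma>)))"
    by (subst integral_distr) auto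
  also have "\<dots> = (CLINT \<omega>|M. iexp (Y \<omega>))" using s by simp
  finally show ?thesis by (simp add: char_std_normal_distribution)
qed

lemma centered_gaussian_rv_char:
  assumes M: "prob_space M" and G: "centered_gaussian_rv M Y"
  shows "integrable M (\<lambda>\<omega>. (Y \<omega>)\<^sup>2)" "(CLINT \<omega>|M. iexp (Y \<omega>)) = exp (- (LINT \<omega>|M. (Y \<omega>)\<^sup>2) / 2)"
proof -
  interpret prob_space M by (rule M)
  have Ym[measurable]: "Y \<in> borel_measurable M" using G by (simp add: centered_gaussian_rv_def)
  have "(integrable M (\<lambda>\<omega>. (Y \<omega>)\<^sup>2)) \<and> (CLINT \<omega>|M. iexp (Y \<omega>)) = exp (- (LINT \<omega>|M. (Y \<omega>)\<^sup>2) / 2)"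
  proof (cases "AE \<omega> in M. Y \<omega> = 0")
    case True
    have i: "integrable M (\<lambda>\<omega>. (Y \<omega>)\<^sup>2) = integrable M (\<lambda>\<omega>. 0::real)"
      by (rule integrable_cong_AE) (use True in auto)
    have a: "(LINT \<omega>|M. (Y \<omega>)\<^sup>2) = (LINT \<omega>|M. 0)"
      by (rule integral_cong_AE) (use True in auto)
    have b: "(CLINT \<omega>|M. iexp (Y \<omega>)) = (CLINT \<omega>|M. 1)"
      by (rule integral_cong_AE) (use True in auto)
    show ?thesis using i a b by (simp add: prob_space)
  next
    case False
    then obtain \<sigma> where s: "\<sigma> > 0" and D: "distributed M lborel Y (normal_density 0 \<sigma>)"
      using G by (auto simp: centered_gaussian_rv_def)
    show ?thesis using normal_second_moment[OF M s D] integral_iexp_normal[OF M s D] by simp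
  qed
  then show "integrable M (\<lambda>\<omega>. (Y \<omega>)\<^sup>2)" "(CLINT \<omega>|M. iexp (Y \<omega>)) = exp (- (LINT \<omega>|M. (Y \<omega>)\<^sup>2) / 2)"
    by auto
qed

lemma integrable_mult_if_square_integrable:
  fixes f g :: "'a \<Rightarrow> real"
  assumes "integrable M (\<lambda>\<omega>. (f \<omega>)\<^sup>2)" "integrable M (\<lambda>\<omega>. (g \<omega>)\<^sup>2)"
    and [measurable]: "f \<in> borel_measurable M" "g \<in> borel_measurable M"
  shows "integrable M (\<lambda>\<omega>. f \<omega> * g \<omega>)"
proof (rule Bochner_Integration.integrable_bound[OF Bochner_Integration.integrable_add[OF assms(1,2)]])
  show "(\<lambda>\<omega>. f \<omega> * g \<omega>) \<in> borel_measurable M" by measurable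
  have "\<bar>x * y\<bar> \<le> x\<^sup>2 + y\<^sup>2" for x y :: real
  proof -
    have "2 * (\<bar>x\<bar> * \<bar>y\<bar>) \<le> x\<^sup>2 + y\<^sup>2"
      using zero_le_power2[of "\<bar>x\<bar> - \<bar>y\<bar>"] by (simp add: power2_eq_square algebra_simps)
    moreover have "0 \<le> \<bar>x\<bar> * \<bar>y\<bar>" by simp
    ultimately show ?thesis unfolding abs_mult by linarith
  qed
  then show "AE \<omega> in M. norm (f \<omega> * g \<omega>) \<le> norm ((f \<omega>)\<^sup>2 + (g \<omega>)\<^sup>2)"
    by simp
qed

lemma integral_square_sum:
  fixes X :: "'j \<Rightarrow> 'a \<Rightarrow> real"
  assumes J: "finite J" and [measurable]: "\<And>j. X j \<in> borel_measurable M"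
    and sq: "\<And>j. j \<in> J \<Longrightarrow> integrable M (\<lambda>\<omega>. (X j \<omega>)\<^sup>2)"
  shows "(LINT \<omega>|M. (\<Sum>j\<in>J. t j * X j \<omega>)\<^sup>2) = (\<Sum>i\<in>J. \<Sum>j\<in>J. t i * t j * (LINT \<omega>|M. X i \<omega> * X j \<omega>))"
proof -
  have int: "integrable M (\<lambda>\<omega>. X i \<omega> * X j \<omega>)" if "i \<in> J" "j \<in> J" for i j
    using that by (intro integrable_mult_if_square_integrable sq) auto
  have "(\<Sum>j\<in>J. t j * X j \<omega>)\<^sup>2 = (\<Sum>i\<in>J. \<Sum>j\<in>J. t i * t j * (X i \<omega> * X j \<omega>))" for \<omega>
    unfolding power2_eq_square sum_product by (simp add: algebra_simps)
  then have "(LINT \<omega>|M. (\<Sum>j\<in>J. t j * X j \<omega>)\<^sup>2) = (\<Sum>i\<in>J. \<Sum>j\<in>J. LINT \<omega>|M. t i * t j * (X i \<omega> * X j \<omega>))"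
    using int by (simp add: Bochner_Integration.integral_sum Bochner_Integration.integrable_sum)
  then show ?thesis by simp
qed

lemma centered_gaussian_vector_char:
  fixes M :: "'a measure" and X :: "'j \<Rightarrow> 'a \<Rightarrow> real"
  assumes M: "prob_space M" and J: "finite J" and X: "\<And>j. X j \<in> borel_measurable M"
    and gauss: "\<And>c. centered_gaussian_rv M (\<lambda>\<omega>. \<Sum>j\<in>J. c j * X j \<omega>)"
  shows "(CLINT \<omega>|M. iexp (\<Sum>j\<in>J. t j * X j \<omega>)) =
         exp (- (\<Sum>i\<in>J. \<Sum>j\<in>J. t i * t j * (LINT \<omega>|M. X i \<omega> * X j \<omega>)) / 2)"
proof -
  have "integrable M (\<lambda>\<omega>. (X i \<omega>)\<^sup>2)" if "i \<in> J" for i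
  proof -
    have "integrable M (\<lambda>\<omega>. (\<Sum>j\<in>J. (if j = i then 1 else 0) * X j \<omega>)\<^sup>2)"
      by (rule centered_gaussian_rv_char(1)[OF M gauss])
    then show ?thesis using J that by (simp add: if_distrib[of "\<lambda>x. x * _"] cong: if_cong)
  qed
  then show ?thesis
    using centered_gaussian_rv_char(2)[OF M gauss[of t]] by (simp add: integral_square_sum[OF J X])
qed

lemma PiM_normal_density:
  fixes K :: "nat set" and \<sigma> :: "nat \<Rightarrow> real"
  assumes K: "finite K" and sp: "\<And>k. k \<in> K \<Longrightarrow> 0 < \<sigma> k"
  defines "N \<equiv> PiM K (\<lambda>k. density lborel (normal_density 0 (\<sigma> k)))"
  shows "prob_space N"
    and "\<And>k. k \<in> K \<Longrightarrow> distributed N lborel (\<lambda>f. f k) (normal_density 0 (\<sigma> k))"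
    and "prob_space.indep_vars N (\<lambda>_. borel) (\<lambda>k f. f k) K"
proof -
  have P: "\<And>k. k \<in> K \<Longrightarrow> prob_space (density lborel (normal_density 0 (\<sigma> k)))"
    using sp by (simp add: prob_space_normal_density)
  show NP: "prob_space N" unfolding N_def by (rule prob_space_PiM) (rule P)
  interpret prob_space N by (rule NP)
  have comp: "distr N borel (\<lambda>f. f k) = density lborel (normal_density 0 (\<sigma> k))" if k: "k \<in> K" for k
  proof -
    have "distr N borel (\<lambda>f. f k) = distr N (density lborel (normal_density 0 (\<sigma> k))) (\<lambda>f. f k)"
      by (rule distr_cong) auto
    also have "\<dots> = density lborel (normal_density 0 (\<sigma> k))"
      unfolding N_def by (rule distr_PiM_component[OF P k])
    finally show ?thesis .
  qed
  show "distributed N lborel (\<lambda>f. f k) (normal_density 0 (\<sigma> k))" if k: "k \<in> K" for k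
    unfolding distributed_def
  proof (intro conjI)
    show "distr N lborel (\<lambda>f. f k) = density lborel (normal_density 0 (\<sigma> k))"
      using comp[OF k] by (simp add: distr_cong[OF refl sets_lborel refl, of N "\<lambda>f. f k"])
    show "(\<lambda>f. f k) \<in> measurable N lborel" unfolding N_def using k by simp
  qed simp
  show "indep_vars (\<lambda>_. borel) (\<lambda>k f. f k) K"
  proof (cases "K = {}")
    case True then show ?thesis by (simp add: indep_vars_def indep_sets_def)
  next
    case False
    have rv: "random_variable borel (\<lambda>f. f k)" if "k \<in> K" for k
      unfolding N_def using that by simp
    have "distr N (PiM K (\<lambda>_. borel)) (\<lambda>x. \<lambda>k\<in>K. x k) = distr N (PiM K (\<lambda>_. borel)) (\<lambda>x. x)"
      by (rule distr_cong) (auto simp: N_def space_PiM)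
    also have "\<dots> = N"
      by (rule distr_id2) (auto simp: N_def intro!: sets_PiM_cong)
    also have "\<dots> = PiM K (\<lambda>k. distr N borel (\<lambda>f. f k))"
      unfolding N_def by (rule PiM_cong) (simp_all add: comp[unfolded N_def])
    finally show ?thesis
      using indep_vars_iff_distr_eq_PiM'[OF False rv] by simp
  qed
qed

lemma distributed_sum_PiM_normal_density:
  fixes K L :: "nat set" and \<sigma> a :: "nat \<Rightarrow> real"
  assumes K: "finite K" and \<sigma>: "\<And>k. k \<in> K \<Longrightarrow> 0 < \<sigma> k"
    and L: "L \<subseteq> K" "L \<noteq> {}" and a: "\<And>k. k \<in> L \<Longrightarrow> a k \<noteq> 0"
  defines "N \<equiv> PiM K (\<lambda>k. density lborel (normal_density 0 (\<sigma> k)))"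
  shows "distributed N lborel (\<lambda>f. \<Sum>k\<in>L. a k * f k) (normal_density 0 (sqrt (\<Sum>k\<in>L. (a k)\<^sup>2 * (\<sigma> k)\<^sup>2)))"
proof -
  interpret prob_space N unfolding N_def using K \<sigma> by (rule PiM_normal_density(1))
  have "indep_vars (\<lambda>_. borel) (\<lambda>k f. f k) K" unfolding N_def using K \<sigma> by (rule PiM_normal_density(3))
  then have indep: "indep_vars (\<lambda>_. borel) (\<lambda>k f. a k * f k) L"
    using indep_vars_compose2[OF indep_vars_subset[OF _ L(1)], where Y="\<lambda>k x. a k * x" and N="\<lambda>_. borel"]
    by simp
  have pos: "0 < \<bar>a k\<bar> * \<sigma> k" if "k \<in> L" for k
    using that a \<sigma> L(1) by auto
  have "distributed N lborel (\<lambda>f. 0 + a k * f k) (normal_density (0 + a k * 0) (\<bar>a k\<bar> * \<sigma> k))"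
    if "k \<in> L" for k
  proof -
    have k: "k \<in> K" "a k \<noteq> 0" using that L(1) a by auto
    have "distributed N lborel (\<lambda>f. f k) (normal_density 0 (\<sigma> k))"
      unfolding N_def using K \<sigma> k(1) by (rule PiM_normal_density(2))
    from normal_density_affine[OF this \<sigma>[OF k(1)] k(2)] show ?thesis .
  qed
  then have "distributed N lborel (\<lambda>f. \<Sum>k\<in>L. a k * f k)
      (normal_density (\<Sum>k\<in>L. 0) (sqrt (\<Sum>k\<in>L. (\<bar>a k\<bar> * \<sigma> k)\<^sup>2)))"
    using finite_subset[OF L(1) K] L(2) indep pos by (intro sum_indep_normal) auto
  then show ?thesis by (simp add: power_mult_distrib)
qed

lemma char_PiM_normal_density:
  fixes K :: "nat set" and \<sigma> a :: "nat \<Rightarrow> real"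
  assumes K: "finite K" and \<sigma>: "\<And>k. k \<in> K \<Longrightarrow> 0 < \<sigma> k"
  defines "N \<equiv> PiM K (\<lambda>k. density lborel (normal_density 0 (\<sigma> k)))"
  shows "(CLINT f|N. iexp (\<Sum>k\<in>K. a k * f k)) = exp (- (\<Sum>k\<in>K. (a k)\<^sup>2 * (\<sigma> k)\<^sup>2) / 2)"
proof -
  interpret prob_space N unfolding N_def using K \<sigma> by (rule PiM_normal_density(1))
  define L where "L = {k\<in>K. a k \<noteq> 0}"
  have L: "L \<subseteq> K" "finite L" using K unfolding L_def by auto
  have "(\<Sum>k\<in>K. a k * f k) = (\<Sum>k\<in>L. a k * f k)" for f
    by (rule sum.mono_neutral_right[OF K L(1)]) (auto simp: L_def)
  moreover have "(\<Sum>k\<in>K. (a k)\<^sup>2 * (\<sigma> k)\<^sup>2) = (\<Sum>k\<in>L. (a k)\<^sup>2 * (\<sigma> k)\<^sup>2)"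
    by (rule sum.mono_neutral_right[OF K L(1)]) (auto simp: L_def)
  moreover have "(CLINT f|N. iexp (\<Sum>k\<in>L. a k * f k)) = exp (- (\<Sum>k\<in>L. (a k)\<^sup>2 * (\<sigma> k)\<^sup>2) / 2)"
  proof (cases "L = {}")
    case True
    then show ?thesis by (simp add: prob_space)
  next
    case False
    have "0 < (a k)\<^sup>2 * (\<sigma> k)\<^sup>2" if "k \<in> L" for k
      using that \<sigma>[of k] by (simp add: L_def)
    then have pos: "0 < (\<Sum>k\<in>L. (a k)\<^sup>2 * (\<sigma> k)\<^sup>2)"
      using L False by (intro sum_pos) auto
    have "distributed N lborel (\<lambda>f. \<Sum>k\<in>L. a k * f k)
        (normal_density 0 (sqrt (\<Sum>k\<in>L. (a k)\<^sup>2 * (\<sigma> k)\<^sup>2)))"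
      unfolding N_def using K \<sigma> L(1) False by (rule distributed_sum_PiM_normal_density) (auto simp: L_def)
    from integral_iexp_normal[OF prob_space_axioms _ this] show ?thesis
      using pos by simp
  qed
  ultimately show ?thesis by simp
qed

lemma power2_sum_mult:
  fixes x :: "'j \<Rightarrow> real"
  shows "(\<Sum>i\<in>J. x i)\<^sup>2 * c = (\<Sum>i\<in>J. \<Sum>j\<in>J. x i * x j * c)"
  unfolding power2_eq_square sum_product unfolding sum_distrib_right ..

lemma sum_square_weights_eq:
  fixes t :: "'j \<Rightarrow> real" and s :: "'k \<Rightarrow> real" and I :: "'j \<Rightarrow> 'k set"
  assumes J: "finite J" and K: "finite K" and IK: "\<And>i. I i \<subseteq> K"
  shows "(\<Sum>k\<in>K. (\<Sum>i\<in>J. if k \<in> I i then t i else 0)\<^sup>2 * s k)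
       = (\<Sum>i\<in>J. \<Sum>j\<in>J. t i * t j * (\<Sum>k\<in>I i \<inter> I j. s k))"
proof -
  have "(\<Sum>k\<in>K. (\<Sum>i\<in>J. if k \<in> I i then t i else 0)\<^sup>2 * s k)
      = (\<Sum>k\<in>K. \<Sum>i\<in>J. \<Sum>j\<in>J. (if k \<in> I i \<inter> I j then t i * t j * s k else 0))"
  proof (intro sum.cong refl)
    fix k
    have "(\<Sum>i\<in>J. if k \<in> I i then t i else 0)\<^sup>2 * s k =
        (\<Sum>i\<in>J. \<Sum>j\<in>J. (if k \<in> I i then t i else 0) * (if k \<in> I j then t j else 0) * s k)"
      by (rule power2_sum_mult)
    also have "\<dots> = (\<Sum>i\<in>J. \<Sum>j\<in>J. (if k \<in> I i \<inter> I j then t i * t j * s k else 0))"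
      by (intro sum.cong refl) auto
    finally show "(\<Sum>i\<in>J. if k \<in> I i then t i else 0)\<^sup>2 * s k =
        (\<Sum>i\<in>J. \<Sum>j\<in>J. (if k \<in> I i \<inter> I j then t i * t j * s k else 0))" .
  qed
  also have "\<dots> = (\<Sum>i\<in>J. \<Sum>k\<in>K. \<Sum>j\<in>J. (if k \<in> I i \<inter> I j then t i * t j * s k else 0))"
    by (rule sum.swap)
  also have "\<dots> = (\<Sum>i\<in>J. \<Sum>j\<in>J. \<Sum>k\<in>K. (if k \<in> I i \<inter> I j then t i * t j * s k else 0))"
    by (intro sum.cong refl sum.swap)
  also have "\<dots> = (\<Sum>i\<in>J. \<Sum>j\<in>J. t i * t j * (\<Sum>k\<in>I i \<inter> I j. s k))"
  proof (intro sum.cong refl)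
    fix i j
    have "(\<Sum>k\<in>K. (if k \<in> I i \<inter> I j then t i * t j * s k else 0)) = (\<Sum>k\<in>K \<inter> (I i \<inter> I j). t i * t j * s k)"
      using K by (simp add: sum.inter_restrict)
    also have "K \<inter> (I i \<inter> I j) = I i \<inter> I j" using IK by blast
    finally show "(\<Sum>k\<in>K. (if k \<in> I i \<inter> I j then t i * t j * s k else 0)) = t i * t j * (\<Sum>k\<in>I i \<inter> I j. s k)"
      by (simp add: sum_distrib_left)
  qed
  finally show ?thesis .
qed

lemma sum_weighted_sums_eq:
  fixes t :: "'j \<Rightarrow> real" and f :: "'k \<Rightarrow> real" and I :: "'j \<Rightarrow> 'k set"
  assumes J: "finite J" and K: "finite K" and IK: "\<And>i. I i \<subseteq> K"
  shows "(\<Sum>i\<in>J. t i * (\<Sum>k\<in>I i. f k)) = (\<Sum>k\<in>K. (\<Sum>i\<in>J. if k \<in> I i then t i else 0) * f k)"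
proof -
  have "(\<Sum>i\<in>J. t i * (\<Sum>k\<in>I i. f k)) = (\<Sum>i\<in>J. \<Sum>k\<in>K. if k \<in> I i then t i * f k else 0)"
  proof (intro sum.cong refl)
    fix i
    have "(\<Sum>k\<in>K. if k \<in> I i then t i * f k else 0) = (\<Sum>k\<in>K \<inter> I i. t i * f k)"
      using K by (simp add: sum.inter_restrict)
    also have "K \<inter> I i = I i" using IK by blast
    finally show "t i * (\<Sum>k\<in>I i. f k) = (\<Sum>k\<in>K. if k \<in> I i then t i * f k else 0)"
      by (simp add: sum_distrib_left)
  qed
  also have "\<dots> = (\<Sum>k\<in>K. \<Sum>i\<in>J. if k \<in> I i then t i * f k else 0)" by (rule sum.swap)
  also have "\<dots> = (\<Sum>k\<in>K. (\<Sum>i\<in>J. if k \<in> I i then t i else 0) * f k)"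
  proof (intro sum.cong refl)
    fix k
    have "(\<Sum>i\<in>J. if k \<in> I i then t i else 0) * f k = (\<Sum>i\<in>J. (if k \<in> I i then t i else 0) * f k)"
      by (rule sum_distrib_right)
    also have "\<dots> = (\<Sum>i\<in>J. if k \<in> I i then t i * f k else 0)"
      by (intro sum.cong refl) auto
    finally show "(\<Sum>i\<in>J. if k \<in> I i then t i * f k else 0) = (\<Sum>i\<in>J. if k \<in> I i then t i else 0) * f k" by simp
  qed
  finally show ?thesis .
qed

lemma sum_comp_eq_sum_image:
  fixes B :: "'p \<Rightarrow> 'a \<Rightarrow> real" and A :: "'j \<Rightarrow> 'p"
  assumes J: "finite J"
  shows "(\<Sum>j\<in>J. c j * B (A j) \<omega>) = (\<Sum>P\<in>A ` J. (\<Sum>j\<in>{j\<in>J. A j = P}. c j) * B P \<omega>)"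
proof -
  have "(\<Sum>j\<in>J. c j * B (A j) \<omega>) = (\<Sum>P\<in>A ` J. \<Sum>j\<in>{j\<in>J. A j = P}. c j * B (A j) \<omega>)"
    by (rule sum.image_gen[OF J])
  also have "\<dots> = (\<Sum>P\<in>A ` J. (\<Sum>j\<in>{j\<in>J. A j = P}. c j) * B P \<omega>)"
    by (intro sum.cong refl) (simp add: sum_distrib_right)
  finally show ?thesis .
qed

lemma distr_eq_sums_of_indep_normals:
  fixes M :: "'a measure" and X :: "'j \<Rightarrow> 'a \<Rightarrow> real" and I :: "'j \<Rightarrow> nat set" and \<sigma> :: "nat \<Rightarrow> real"
  assumes M: "prob_space M" and J: "finite J" and X: "\<And>j. X j \<in> borel_measurable M"
    and gauss: "\<And>c. centered_gaussian_rv M (\<lambda>\<omega>. \<Sum>j\<in>J. c j * X j \<omega>)"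
    and K: "finite K" and IK: "\<And>j. I j \<subseteq> K" and \<sigma>: "\<And>k. k \<in> K \<Longrightarrow> 0 < \<sigma> k"
    and cov: "\<And>i j. i \<in> J \<Longrightarrow> j \<in> J \<Longrightarrow> (LINT \<omega>|M. X i \<omega> * X j \<omega>) = (\<Sum>k\<in>I i \<inter> I j. (\<sigma> k)\<^sup>2)"
  shows "distr M (PiM J (\<lambda>_. borel)) (\<lambda>\<omega>. \<lambda>j\<in>J. X j \<omega>)
       = distr (PiM K (\<lambda>k. density lborel (normal_density 0 (\<sigma> k)))) (PiM J (\<lambda>_. borel))
           (\<lambda>\<omega>. \<lambda>j\<in>J. \<Sum>k\<in>I j. \<omega> k)"
proof (rule distr_PiM_eq_if_char_eq[OF M PiM_normal_density(1)[OF K \<sigma>] J X])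
  show "(\<lambda>\<omega>. \<Sum>k\<in>I j. \<omega> k) \<in> borel_measurable (PiM K (\<lambda>k. density lborel (normal_density 0 (\<sigma> k))))"
    for j
    using IK[of j] by (intro borel_measurable_sum) auto
  fix t :: "'j \<Rightarrow> real"
  define a where "a k = (\<Sum>i\<in>J. if k \<in> I i then t i else 0)" for k
  have "(CLINT \<omega>|M. iexp (\<Sum>j\<in>J. t j * X j \<omega>))
      = exp (- (\<Sum>i\<in>J. \<Sum>j\<in>J. t i * t j * (LINT \<omega>|M. X i \<omega> * X j \<omega>)) / 2)"
    by (rule centered_gaussian_vector_char[OF M J X gauss])
  also have "(\<Sum>i\<in>J. \<Sum>j\<in>J. t i * t j * (LINT \<omega>|M. X i \<omega> * X j \<omega>)) = (\<Sum>k\<in>K. (a k)\<^sup>2 * (\<sigma> k)\<^sup>2)"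
    unfolding a_def sum_square_weights_eq[OF J K IK] by (intro sum.cong refl) (simp add: cov)
  also have "exp (- \<dots> / 2) = (CLINT \<omega>|PiM K (\<lambda>k. density lborel (normal_density 0 (\<sigma> k))). iexp (\<Sum>k\<in>K. a k * \<omega> k))"
    by (rule char_PiM_normal_density[OF K \<sigma>, symmetric])
  also have "\<dots> = (CLINT \<omega>|PiM K (\<lambda>k. density lborel (normal_density 0 (\<sigma> k))). iexp (\<Sum>j\<in>J. t j * (\<Sum>k\<in>I j. \<omega> k)))"
    unfolding a_def by (simp only: sum_weighted_sums_eq[OF J K IK])
  finally show "(CLINT \<omega>|M. iexp (\<Sum>j\<in>J. t j * X j \<omega>))
      = (CLINT \<omega>|PiM K (\<lambda>k. density lborel (normal_density 0 (\<sigma> k))). iexp (\<Sum>j\<in>J. t j * (\<Sum>k\<in>I j. \<omega> k)))" .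
qed

section \<open>The tree of the river metric\<close>

definition river_depth :: "real \<times> real \<Rightarrow> real" where
  "river_depth P = \<bar>fst P\<bar> + \<bar>snd P\<bar>"

text \<open>Q lies on the river path from the origin to P: on the vertical segment from (fst P, 0)
  to P, or on the first axis between the origin and (fst P, 0).\<close>
definition river_below :: "real \<times> real \<Rightarrow> real \<times> real \<Rightarrow> bool" where
  "river_below Q P \<longleftrightarrow> (fst Q = fst P \<and> 0 \<le> snd Q * snd P \<and> \<bar>snd Q\<bar> \<le> \<bar>snd P\<bar>) \<or>
     (snd Q = 0 \<and> ((0 \<le> fst Q \<and> fst Q \<le> fst P) \<or> (fst P \<le> fst Q \<and> fst Q \<le> 0)))"

definition river_meet :: "real \<times> real \<Rightarrow> real \<times> real \<Rightarrow> real \<times> real" where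
  "river_meet P Q =
     (if fst P = fst Q then
        (if 0 \<le> snd P * snd Q then (if \<bar>snd P\<bar> \<le> \<bar>snd Q\<bar> then P else Q) else (fst P, 0))
      else if 0 < fst P * fst Q then (if \<bar>fst P\<bar> \<le> \<bar>fst Q\<bar> then (fst P, 0) else (fst Q, 0))
      else (0, 0))"

lemma river_dist_origin: "river_dist (0, 0) P = river_depth P"
  by (auto simp: river_dist_def river_depth_def)

lemma river_depth_meet:
  "river_depth (river_meet P Q) = (river_depth P + river_depth Q - river_dist P Q) / 2"
proof -
  obtain a b a' b' where PQ: "P = (a, b)" "Q = (a', b')" by (cases P, cases Q)
  show ?thesis
    unfolding PQ river_meet_def river_depth_def river_dist_def
    by (cases "a = a'"; cases "0 \<le> b * b'"; cases "0 < a * a'")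
       (auto simp: abs_if zero_le_mult_iff zero_less_mult_iff)
qed

lemma river_below_meet_iff:
  "river_below R (river_meet P Q) \<longleftrightarrow> river_below R P \<and> river_below R Q"
proof -
  obtain a b a' b' where PQ: "P = (a, b)" "Q = (a', b')" by (cases P, cases Q)
  obtain x y where R: "R = (x, y)" by (cases R)
  have nonneg: "0 \<le> u * v \<longleftrightarrow> (0 \<le> u \<and> 0 \<le> v) \<or> (u \<le> 0 \<and> v \<le> 0)" for u v :: real
    by (auto simp: zero_le_mult_iff)
  show ?thesis
  proof (cases "a = a'")
    case True
    then show ?thesis
      unfolding PQ R river_meet_def
      by (cases "0 \<le> b * b'"; cases "\<bar>b\<bar> \<le> \<bar>b'\<bar>"; simp)
         (unfold river_below_def nonneg; auto simp: abs_if split: if_splits)+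
  next
    case False
    then show ?thesis
      unfolding PQ R river_meet_def
      by (cases "0 < a * a'"; cases "\<bar>a\<bar> \<le> \<bar>a'\<bar>"; simp)
         (unfold river_below_def nonneg; auto simp: abs_if zero_less_mult_iff split: if_splits)+
  qed
qed

lemma river_meet_cases:
  "river_meet P Q \<in> {P, Q, (fst P, 0), (fst Q, 0), (0, 0)}"
  by (simp add: river_meet_def)

lemma river_below_refl: "river_below P P"
  by (auto simp: river_below_def)

lemma river_below_origin: "river_below (0, 0) P"
  by (auto simp: river_below_def)

lemma river_below_origin_iff: "river_below Q (0, 0) \<longleftrightarrow> Q = (0, 0)"
  by (cases Q) (auto simp: river_below_def)

lemma river_below_trans: "river_below R Q \<Longrightarrow> river_below Q P \<Longrightarrow> river_below R P"
  by (cases R, cases Q, cases P) (auto simp: river_below_def zero_le_mult_iff abs_if split: if_splits)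

lemma river_below_linear: "river_below R P \<Longrightarrow> river_below Q P \<Longrightarrow> river_below R Q \<or> river_below Q R"
  by (cases R, cases Q, cases P) (auto simp: river_below_def zero_le_mult_iff abs_if split: if_splits)

lemma river_below_depth_less: "river_below R Q \<Longrightarrow> R \<noteq> Q \<Longrightarrow> river_depth R < river_depth Q"
  by (cases R, cases Q) (auto simp: river_below_def river_depth_def zero_le_mult_iff abs_if split: if_splits)

definition river_ancestors :: "(real \<times> real) set \<Rightarrow> real \<times> real \<Rightarrow> (real \<times> real) set" where
  "river_ancestors V P = {Q \<in> V - {(0, 0)}. river_below Q P}"

definition river_edge :: "(real \<times> real) set \<Rightarrow> real \<times> real \<Rightarrow> real" where
  "river_edge V Q = river_depth Q - Max (river_depth ` {R \<in> V. river_below R Q \<and> R \<noteq> Q})"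

lemma river_parent_exists:
  assumes V: "finite V" "(0, 0) \<in> V" and P: "P \<in> V" "P \<noteq> (0, 0)"
  obtains P' where "P' \<in> V" "river_below P' P" "P' \<noteq> P"
    "river_edge V P = river_depth P - river_depth P'"
    "river_ancestors V P = insert P (river_ancestors V P')" "P \<notin> river_ancestors V P'"
proof -
  let ?S = "{R \<in> V. river_below R P \<and> R \<noteq> P}"
  have S: "finite ?S" "(0, 0) \<in> ?S" using V P river_below_origin by auto
  then obtain P' where P': "P' \<in> ?S" "river_depth P' = Max (river_depth ` ?S)"
    using Max_in[of "river_depth ` ?S"] by fastforce
  then have P'V: "P' \<in> V" and bP': "river_below P' P" and nP': "P' \<noteq> P" by auto
  have "river_below Q P'" if Q: "Q \<in> ?S" for Q
  proof -
    have "river_depth Q \<le> river_depth P'" using Q P' S by auto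
    moreover have "river_below Q P' \<or> river_below P' Q"
      using river_below_linear[of Q P P'] Q bP' by blast
    ultimately show ?thesis
      using river_below_depth_less[of P' Q] river_below_refl[of Q] by force
  qed
  then have "river_ancestors V P = insert P (river_ancestors V P')"
    using P bP' river_below_refl[of P] river_below_trans[OF _ bP']
    unfolding river_ancestors_def by blast
  moreover have "P \<notin> river_ancestors V P'"
    using river_below_depth_less[OF bP' nP'] river_below_depth_less[of P P'] nP'
    unfolding river_ancestors_def by auto
  moreover have "river_edge V P = river_depth P - river_depth P'"
    using P'(2) unfolding river_edge_def by simp
  ultimately show thesis using that P'V bP' nP' by blast
qed

lemma river_edge_pos:
  assumes "finite V" "(0, 0) \<in> V" "P \<in> V" "P \<noteq> (0, 0)"
  shows "river_edge V P > 0"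
proof -
  obtain P' where "river_below P' P" "P' \<noteq> P" "river_edge V P = river_depth P - river_depth P'"
    using river_parent_exists[OF assms] by blast
  then show ?thesis using river_below_depth_less by fastforce
qed

lemma sum_river_edge_ancestors:
  assumes V: "finite V" "(0, 0) \<in> V" and P: "P \<in> V"
  shows "(\<Sum>Q\<in>river_ancestors V P. river_edge V Q) = river_depth P"
  using P
proof (induction "card (river_ancestors V P)" arbitrary: P rule: less_induct)
  case less
  have fin: "finite (river_ancestors V R)" for R using V unfolding river_ancestors_def by auto
  show ?case
  proof (cases "P = (0, 0)")
    case True
    then show ?thesis by (simp add: river_ancestors_def river_below_origin_iff river_depth_def)
  next
    case False
    obtain P' where P': "P' \<in> V" "river_edge V P = river_depth P - river_depth P'"
      and anc: "river_ancestors V P = insert P (river_ancestors V P')" "P \<notin> river_ancestors V P'"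
      using river_parent_exists[OF V less.prems False] by blast
    have "card (river_ancestors V P') < card (river_ancestors V P)"
      using anc fin by simp
    then show ?thesis using less.hyps[OF _ P'(1)] anc P'(2) fin by simp
  qed
qed

lemma sum_river_edge_common_ancestors:
  assumes V: "finite V" "(0, 0) \<in> V" and proj: "\<And>P. P \<in> V \<Longrightarrow> (fst P, 0) \<in> V"
    and P: "P \<in> V" and Q: "Q \<in> V"
  shows "(\<Sum>R\<in>river_ancestors V P \<inter> river_ancestors V Q. river_edge V R)
       = (river_dist (0, 0) P + river_dist (0, 0) Q - river_dist P Q) / 2"
proof -
  have "river_meet P Q \<in> V" using river_meet_cases[of P Q] P Q proj[OF P] proj[OF Q] V(2) by (metis empty_iff insertE)
  moreover have "river_ancestors V P \<inter> river_ancestors V Q = river_ancestors V (river_meet P Q)"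
    unfolding river_ancestors_def river_below_meet_iff by auto
  ultimately show ?thesis
    using sum_river_edge_ancestors[OF V] river_depth_meet by (simp add: river_dist_origin)
qed

lemma river_cov_tree_representation:
  assumes V: "finite V" "(0, 0) \<in> V" and proj: "\<And>P. P \<in> V \<Longrightarrow> (fst P, 0) \<in> V"
  obtains I :: "real \<times> real \<Rightarrow> nat set" and \<sigma> :: "nat \<Rightarrow> real"
  where "\<And>P. I P \<subseteq> {1..card V - 1}" and "\<And>k. 0 < \<sigma> k"
    and "\<And>P Q. P \<in> V \<Longrightarrow> Q \<in> V \<Longrightarrow>
      (\<Sum>k\<in>I P \<inter> I Q. (\<sigma> k)\<^sup>2) = (river_dist (0, 0) P + river_dist (0, 0) Q - river_dist P Q) / 2"
proof -
  let ?V' = "V - {(0, 0)}"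
  have "card ?V' = card V - 1" using V by (simp add: card_Diff_singleton)
  then obtain h where h: "bij_betw h {1..card V - 1} ?V'"
    using ex_bij_betw_nat_finite_1[of ?V'] V(1) by auto
  \<comment> \<open>indices outside the range of h get unit variance and lie in no I P\<close>
  define \<sigma> where "\<sigma> k = (if k \<in> {1..card V - 1} then sqrt (river_edge V (h k)) else 1)" for k
  define I where "I P = {k \<in> {1..card V - 1}. h k \<in> river_ancestors V P}" for P
  have edge_pos: "0 < river_edge V (h k)" if "k \<in> {1..card V - 1}" for k
    using bij_betwE[OF h] that V by (intro river_edge_pos) auto
  have cov: "(\<Sum>k\<in>I P \<inter> I Q. (\<sigma> k)\<^sup>2) = (river_dist (0, 0) P + river_dist (0, 0) Q - river_dist P Q) / 2"
    if "P \<in> V" "Q \<in> V" for P Q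
  proof -
    let ?T = "river_ancestors V P \<inter> river_ancestors V Q"
    have "?T \<subseteq> ?V'" by (auto simp: river_ancestors_def)
    have "I P \<inter> I Q = {k \<in> {1..card V - 1}. h k \<in> ?T}" by (auto simp: I_def)
    then have "(\<Sum>k\<in>I P \<inter> I Q. (\<sigma> k)\<^sup>2) = (\<Sum>k\<in>{k \<in> {1..card V - 1}. h k \<in> ?T}. river_edge V (h k))"
      using edge_pos by (intro sum.cong) (auto simp: \<sigma>_def less_imp_le)
    also have "\<dots> = (\<Sum>k\<in>{1..card V - 1}. if h k \<in> ?T then river_edge V (h k) else 0)"
      by (rule sum.inter_filter) simp
    also have "\<dots> = (\<Sum>R\<in>?V'. if R \<in> ?T then river_edge V R else 0)"
      by (rule sum.reindex_bij_betw[OF h])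
    also have "\<dots> = (\<Sum>R\<in>{R \<in> ?V'. R \<in> ?T}. river_edge V R)"
      by (rule sum.inter_filter[symmetric]) (use V(1) in simp)
    also have "\<dots> = (\<Sum>R\<in>?T. river_edge V R)"
      using \<open>?T \<subseteq> ?V'\<close> by (intro sum.cong) auto
    also have "\<dots> = (river_dist (0, 0) P + river_dist (0, 0) Q - river_dist P Q) / 2"
      by (rule sum_river_edge_common_ancestors[OF V proj that])
    finally show ?thesis .
  qed
  moreover have "I P \<subseteq> {1..card V - 1}" for P by (auto simp: I_def)
  moreover have "0 < \<sigma> k" for k using edge_pos by (simp add: \<sigma>_def)
  ultimately show thesis using that by blast
qed

theorem proposition4p4:
  fixes M :: "'a measure"
    and B :: "real \<times> real \<Rightarrow> 'a \<Rightarrow> real"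
    and A :: "nat \<Rightarrow> real \<times> real"
    and n q :: nat
    and ns :: "nat \<Rightarrow> nat"
  assumes gp: "centered_gaussian_process M B"
    and B0: "AE \<omega> in M. B (0, 0) \<omega> = 0"
    and cov: "\<And>X Y. prob_space.expectation M (\<lambda>\<omega>. B X \<omega> * B Y \<omega>)
                = (river_dist (0, 0) X + river_dist (0, 0) Y - river_dist X Y) / 2"
    and origin: "(0, 0) \<in> A ` {1..n}"
    and proj: "\<And>i. i \<in> {1..n} \<Longrightarrow> (fst (A i), 0) \<in> A ` {1..n}"
    and ns_pos: "\<And>l. l \<in> {1..q} \<Longrightarrow> ns l > 0"
    and ns_sum: "(\<Sum>l=1..q. ns l) = n"
    and const_first: "\<And>l i. l \<in> {1..q} \<Longrightarrow>
           (\<Sum>j=1..l-1. ns j) + 1 \<le> i \<Longrightarrow> i \<le> (\<Sum>j=1..l. ns j) \<Longrightarrow>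
           fst (A i) = fst (A ((\<Sum>j=1..l-1. ns j) + 1))"
    and incr_first: "\<And>l. l \<in> {1..<q} \<Longrightarrow>
           fst (A (\<Sum>j=1..l. ns j)) < fst (A ((\<Sum>j=1..l. ns j) + 1))"
    and mono_second: "\<And>l i. l \<in> {1..q} \<Longrightarrow>
           (\<Sum>j=1..l-1. ns j) + 1 \<le> i \<Longrightarrow> i < (\<Sum>j=1..l. ns j) \<Longrightarrow>
           snd (A i) \<le> snd (A (Suc i))"
  shows "\<exists>(N :: (nat \<Rightarrow> real) measure) (Z :: nat \<Rightarrow> (nat \<Rightarrow> real) \<Rightarrow> real) (I :: nat \<Rightarrow> nat set).
           prob_space N \<and>
           prob_space.indep_vars N (\<lambda>_. borel) Z {1..n-1} \<and>
           (\<forall>k\<in>{1..n-1}. gaussian_rv N (Z k)) \<and>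
           (\<forall>i\<in>{1..n}. I i \<subseteq> {1..n-1}) \<and>
           distr M (PiM {1..n} (\<lambda>_. borel)) (\<lambda>\<omega>. \<lambda>i\<in>{1..n}. B (A i) \<omega>)
             = distr N (PiM {1..n} (\<lambda>_. borel)) (\<lambda>\<omega>. \<lambda>i\<in>{1..n}. \<Sum>k\<in>I i. Z k \<omega>)"
proof -
  have M: "prob_space M" and meas: "\<And>P. B P \<in> borel_measurable M"
    and gauss: "\<And>F c. finite F \<Longrightarrow> centered_gaussian_rv M (\<lambda>\<omega>. \<Sum>P\<in>F. c P * B P \<omega>)"
    using gp unfolding centered_gaussian_process_def by auto
  let ?V = "A ` {1..n}"
  obtain I \<sigma> where I: "\<And>P. I P \<subseteq> {1..card ?V - 1}" and \<sigma>: "\<And>k. 0 < \<sigma> k"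
    and cov_tree: "\<And>P Q. P \<in> ?V \<Longrightarrow> Q \<in> ?V \<Longrightarrow>
      (\<Sum>k\<in>I P \<inter> I Q. (\<sigma> k)\<^sup>2) = (river_dist (0, 0) P + river_dist (0, 0) Q - river_dist P Q) / 2"
    using river_cov_tree_representation[of ?V] origin proj by blast
  have IK: "I (A i) \<subseteq> {1..n - 1}" for i
    using I[of "A i"] card_image_le[of "{1..n}" A] by force
  let ?N = "PiM {1..n - 1} (\<lambda>k. density lborel (normal_density 0 (\<sigma> k)))"
  have law: "distr M (PiM {1..n} (\<lambda>_. borel)) (\<lambda>\<omega>. \<lambda>i\<in>{1..n}. B (A i) \<omega>)
      = distr ?N (PiM {1..n} (\<lambda>_. borel)) (\<lambda>\<omega>. \<lambda>i\<in>{1..n}. \<Sum>k\<in>I (A i). \<omega> k)"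
  proof (rule distr_eq_sums_of_indep_normals[OF M finite_atLeastAtMost meas _ finite_atLeastAtMost IK \<sigma>])
    show "centered_gaussian_rv M (\<lambda>\<omega>. \<Sum>i\<in>{1..n}. c i * B (A i) \<omega>)" for c
      unfolding sum_comp_eq_sum_image[OF finite_atLeastAtMost] by (rule gauss) simp
    show "(LINT \<omega>|M. B (A i) \<omega> * B (A j) \<omega>) = (\<Sum>k\<in>I (A i) \<inter> I (A j). (\<sigma> k)\<^sup>2)"
      if "i \<in> {1..n}" "j \<in> {1..n}" for i j
      using that by (simp add: cov cov_tree)
  qed
  have gaussian: "gaussian_rv ?N (\<lambda>\<omega>. \<omega> k)" if "k \<in> {1..n - 1}" for k
    unfolding gaussian_rv_def
    by (intro exI[of _ 0] exI[of _ "\<sigma> k"] conjI \<sigma> PiM_normal_density(2)[OF finite_atLeastAtMost \<sigma> that])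
  show ?thesis
  proof (intro exI conjI)
    show "prob_space ?N" by (rule PiM_normal_density(1)[OF finite_atLeastAtMost \<sigma>])
    show "prob_space.indep_vars ?N (\<lambda>_. borel) (\<lambda>k \<omega>. \<omega> k) {1..n - 1}"
      by (rule PiM_normal_density(3)[OF finite_atLeastAtMost \<sigma>])
    show "\<forall>k\<in>{1..n - 1}. gaussian_rv ?N (\<lambda>\<omega>. \<omega> k)" using gaussian by blast
    show "\<forall>i\<in>{1..n}. I (A i) \<subseteq> {1..n - 1}" using IK by blast
  qed (fact law)
qed

end
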